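(* Let $0<\epsilon\le1/4$ and $0<\delta<1$. Let $\rho,\tilde\rho\in\mathbb{R}^{n\times n}$ be density matrices with $\sum_i|\tilde\rho_{ii}-\rho_{ii}|\le\epsilon/8$. Let $m=137\,\epsilon^{-2}(n\ln2+\ln(1/\delta))$, draw $N\sim\mathrm{Pois}(m)$, measure $N$ independent copies of $\tilde\rho$ in the computational basis, let $N_i$ be the number of outcomes equal to $i$, and set $\hat\rho_{ii}=N_i/m$. Then with probability at least $1-\delta$, $\sum_i|\hat\rho_{ii}-\rho_{ii}|\le\epsilon/4$.
   Context: A density matrix is a psd matrix of trace one; measuring $\tilde\rho$ in the computational basis yields outcome $i$ with probability $\tilde\rho_{ii}$. *)

theory Defs
  imports "HOL-Probability.Probability"
begin

text \<open>Real n x n matrices are represented as functions nat => nat => real,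
  with only indices below n relevant.\<close>

definition density_matrix :: "nat \<Rightarrow> (nat \<Rightarrow> nat \<Rightarrow> real) \<Rightarrow> bool" where
  "density_matrix n \<rho> \<longleftrightarrow>
     (\<forall>i<n. \<forall>j<n. \<rho> i j = \<rho> j i) \<and>
     (\<forall>x :: nat \<Rightarrow> real. (\<Sum>i<n. \<Sum>j<n. x i * \<rho> i j * x j) \<ge> 0) \<and>
     (\<Sum>i<n. \<rho> i i) = 1"

definition measure_comp_basis :: "nat \<Rightarrow> (nat \<Rightarrow> nat \<Rightarrow> real) \<Rightarrow> nat pmf" where
  "measure_comp_basis n \<rho> = embed_pmf (\<lambda>i. if i < n then \<rho> i i else 0)"

definition poissonized_measurements :: "real \<Rightarrow> nat \<Rightarrow> (nat \<Rightarrow> nat \<Rightarrow> real) \<Rightarrow> nat list pmf" where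
  "poissonized_measurements m n \<rho> =
     bind_pmf (poisson_pmf m) (\<lambda>N. replicate_pmf N (measure_comp_basis n \<rho>))"

end

theory Submission
  imports Defs
begin

(* Write p_i for the diagonal of the measured state. Poissonization makes the moment generating
   function of the counts factor: E exp (sum_i theta_i N_i) = exp (m sum_i p_i (e^theta_i - 1)).
   The L1 deviation sum_i |N_i - m p_i| is the largest of the 2^n signed sums
   sum_i sigma_i (N_i - m p_i), sigma in {-1,1}^n. For each sign pattern a Chernoff bound with
   theta = t sigma, t = eps/8, together with e^x - 1 - x <= (1/2 + |x|) x^2, bounds the probability
   that the signed sum exceeds m t by exp (-(1/2 - t) m t^2), which is at most delta / 2^n for the
   given m. A union bound over the patterns gives sum_i |N_i/m - p_i| <= eps/8 with probability at
   least 1 - delta, and the triangle inequality with the eps/8 closeness of the diagonals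
   gives eps/4. *)

lemma exp_le_cubic:
  fixes x :: real assumes "0 \<le> x" "x \<le> 1"
  shows "exp x \<le> 1 + x + x\<^sup>2 / 2 + x ^ 3"
proof -
  let ?f = "\<lambda>y::real. 1 + y + y\<^sup>2 / 2 + y ^ 3 - exp y"
  have "?f 0 \<le> ?f x"
  proof (rule DERIV_nonneg_imp_nondecreasing[OF assms(1)])
    fix y :: real assume y: "0 \<le> y" "y \<le> x"
    have "DERIV ?f y :> 1 + y + 3 * y\<^sup>2 - exp y"
      by (auto intro!: derivative_eq_intros simp: power2_eq_square)
    moreover have "exp y \<le> 1 + y + y\<^sup>2" using exp_bound[of y] y assms by auto
    ultimately show "\<exists>d. DERIV ?f y :> d \<and> 0 \<le> d"
      by (smt (verit) zero_le_power2)
  qed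
  then show ?thesis by simp
qed

lemma exp_le_quadratic_nonpos:
  fixes x :: real assumes "x \<le> 0"
  shows "exp x \<le> 1 + x + x\<^sup>2 / 2"
proof -
  let ?f = "\<lambda>y::real. 1 - y + y\<^sup>2 / 2 - exp (- y)"
  have "?f 0 \<le> ?f (- x)"
  proof (rule DERIV_nonneg_imp_nondecreasing[of 0 "- x" ?f])
    fix y :: real assume "0 \<le> y" "y \<le> - x"
    have "DERIV ?f y :> y - 1 + exp (- y)"
      by (auto intro!: derivative_eq_intros simp: power2_eq_square)
    moreover have "1 - y \<le> exp (- y)" using exp_ge_add_one_self[of "- y"] by simp
    ultimately show "\<exists>d. DERIV ?f y :> d \<and> 0 \<le> d" by force
  qed (use assms in simp)
  then show ?thesis by simp
qed

lemma exp_minus_one_minus_le: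
  fixes x :: real assumes "\<bar>x\<bar> \<le> 1"
  shows "exp x - 1 - x \<le> (1/2 + \<bar>x\<bar>) * x\<^sup>2"
proof (cases "0 \<le> x")
  case True
  then have "x ^ 3 = \<bar>x\<bar> * x\<^sup>2" by (simp add: power3_eq_cube power2_eq_square)
  with exp_le_cubic[of x] True assms show ?thesis by (simp add: algebra_simps)
next
  case False
  have "0 \<le> \<bar>x\<bar> * x\<^sup>2" by simp
  with exp_le_quadratic_nonpos[of x] False show ?thesis by (simp add: algebra_simps)
qed

lemma exp_scaled_minus_one_minus_le:
  fixes t s :: real assumes "0 \<le> t" and "t \<le> 1" and "\<bar>s\<bar> \<le> 1"
  shows "exp (t * s) - 1 - t * s \<le> (1/2 + t) * t\<^sup>2"
proof -
  have "\<bar>t * s\<bar> \<le> t"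
    using assms by (simp add: abs_mult mult_left_le)
  moreover from this have "(t * s)\<^sup>2 \<le> t\<^sup>2"
    by (metis abs_le_square_iff abs_of_nonneg \<open>0 \<le> t\<close>)
  ultimately have "(1/2 + \<bar>t * s\<bar>) * (t * s)\<^sup>2 \<le> (1/2 + t) * t\<^sup>2"
    by (intro mult_mono) auto
  moreover have "exp (t * s) - 1 - t * s \<le> (1/2 + \<bar>t * s\<bar>) * (t * s)\<^sup>2"
    using \<open>\<bar>t * s\<bar> \<le> t\<close> \<open>t \<le> 1\<close> by (intro exp_minus_one_minus_le) simp
  ultimately show ?thesis by linarith
qed

lemma nn_integral_poisson_pmf_power:
  fixes r a :: real assumes r: "0 < r" and a: "0 \<le> a"
  shows "(\<integral>\<^sup>+N. ennreal (a ^ N) \<partial>measure_pmf (poisson_pmf r)) = ennreal (exp (r * (a - 1)))"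
proof -
  have summable: "summable (\<lambda>N. (r * a) ^ N / fact N)"
    using summable_exp[of "r * a"] by (simp add: field_simps divide_inverse [symmetric])
  have "(\<integral>\<^sup>+N. ennreal (a ^ N) \<partial>measure_pmf (poisson_pmf r)) =
      (\<integral>\<^sup>+N. ennreal (exp (- r)) * ennreal ((r * a) ^ N / fact N) \<partial>count_space UNIV)"
    unfolding nn_integral_measure_pmf using r a
    by (intro nn_integral_cong) (simp add: ennreal_mult'[symmetric] power_mult_distrib field_simps)
  also have "\<dots> = ennreal (exp (- r)) * (\<integral>\<^sup>+N. ennreal ((r * a) ^ N / fact N) \<partial>count_space UNIV)"
    by (simp add: nn_integral_cmult)
  also have "(\<integral>\<^sup>+N. ennreal ((r * a) ^ N / fact N) \<partial>count_space UNIV) = ennreal (exp (r * a))"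
    using r a summable
    by (simp add: nn_integral_count_space_nat suminf_ennreal ennreal_suminf_neq_top exp_def
        field_simps divide_inverse [symmetric])
  also have "ennreal (exp (- r)) * ennreal (exp (r * a)) = ennreal (exp (r * (a - 1)))"
    by (simp add: ennreal_mult[symmetric] mult_exp_exp algebra_simps)
  finally show ?thesis .
qed

lemma nn_integral_replicate_pmf_prod_list:
  fixes w :: "'a \<Rightarrow> real" assumes w: "\<And>x. 0 \<le> w x"
  shows "(\<integral>\<^sup>+xs. ennreal (prod_list (map w xs)) \<partial>measure_pmf (replicate_pmf N p)) =
         (\<integral>\<^sup>+x. ennreal (w x) \<partial>measure_pmf p) ^ N"
proof (induction N)
  case (Suc N)
  have "(\<integral>\<^sup>+xs. ennreal (prod_list (map w xs)) \<partial>measure_pmf (replicate_pmf (Suc N) p)) =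
      (\<integral>\<^sup>+x. ennreal (w x) * (\<integral>\<^sup>+xs. ennreal (prod_list (map w xs)) \<partial>measure_pmf (replicate_pmf N p))
         \<partial>measure_pmf p)"
    using w by (simp add: ennreal_mult' prod_list_nonneg nn_integral_cmult)
  then show ?case by (simp add: Suc.IH nn_integral_multc)
qed simp

lemma exp_sum_count_list:
  fixes \<theta> :: "nat \<Rightarrow> real"
  shows "exp (\<Sum>i<n. \<theta> i * real (count_list xs i)) =
         prod_list (map (\<lambda>x. if x < n then exp (\<theta> x) else 1) xs)"
proof (induction xs)
  case (Cons x xs)
  have "(\<Sum>i<n. \<theta> i * real (count_list (x # xs) i)) =
      (\<Sum>i<n. \<theta> i * real (count_list xs i)) + (\<Sum>i<n. if x = i then \<theta> i else 0)"
    by (subst sum.distrib[symmetric], rule sum.cong) (auto simp: algebra_simps)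
  also have "(\<Sum>i<n. if x = i then \<theta> i else 0) = (if x < n then \<theta> x else 0)"
    by (simp add: sum.delta)
  finally show ?case using Cons by (simp add: exp_add)
qed simp

lemma density_matrix_diag_nonneg:
  assumes "density_matrix n \<rho>" and "k < n"
  shows "0 \<le> \<rho> k k"
proof -
  let ?e = "\<lambda>i. if i = k then 1 else 0 :: real"
  have "0 \<le> (\<Sum>i<n. \<Sum>j<n. ?e i * \<rho> i j * ?e j)"
    using assms(1) unfolding density_matrix_def by (elim conjE allE)
  also have "\<dots> = \<rho> k k"
    using assms(2)
    by (simp add: if_distrib[of "\<lambda>c. c * _"] if_distrib[of "(*) _"] sum.delta' cong: if_cong)
  finally show ?thesis .
qed

lemma density_matrix_trace: "density_matrix n \<rho> \<Longrightarrow> (\<Sum>i<n. \<rho> i i) = 1"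
  unfolding density_matrix_def by blast

lemma pmf_measure_comp_basis:
  assumes nonneg: "\<And>i. i < n \<Longrightarrow> 0 \<le> \<rho> i i" and trace: "(\<Sum>i<n. \<rho> i i) = 1"
  shows "pmf (measure_comp_basis n \<rho>) x = (if x < n then \<rho> x x else 0)"
proof -
  have "(\<integral>\<^sup>+x. ennreal (if x < n then \<rho> x x else 0) \<partial>count_space UNIV) =
      (\<integral>\<^sup>+x. ennreal (\<rho> x x) * indicator {..<n} x \<partial>count_space UNIV)"
    by (intro nn_integral_cong) (auto split: split_indicator)
  also have "\<dots> = (\<Sum>x<n. ennreal (\<rho> x x))"
    by (subst nn_integral_indicator_finite) auto
  also have "\<dots> = 1" using nonneg trace by (subst sum_ennreal) auto
  finally show ?thesis unfolding measure_comp_basis_def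
    by (subst pmf_embed_pmf) (use nonneg in auto)
qed

lemma nn_integral_measure_comp_basis:
  assumes nonneg: "\<And>i. i < n \<Longrightarrow> 0 \<le> \<rho> i i" and trace: "(\<Sum>i<n. \<rho> i i) = 1"
    and w: "\<And>x. 0 \<le> w x"
  shows "(\<integral>\<^sup>+x. ennreal (w x) \<partial>measure_pmf (measure_comp_basis n \<rho>)) = ennreal (\<Sum>i<n. \<rho> i i * w i)"
proof -
  note pmf = pmf_measure_comp_basis[of n \<rho>, OF nonneg trace]
  have "(\<integral>\<^sup>+x. ennreal (w x) \<partial>measure_pmf (measure_comp_basis n \<rho>)) =
      (\<Sum>x<n. ennreal (w x) * pmf (measure_comp_basis n \<rho>) x)"
    by (rule nn_integral_measure_pmf_support) (auto simp: set_pmf_eq pmf)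
  also have "\<dots> = (\<Sum>x<n. ennreal (\<rho> x x * w x))"
    using nonneg w by (intro sum.cong) (auto simp: pmf ennreal_mult'[symmetric] mult.commute)
  also have "\<dots> = ennreal (\<Sum>i<n. \<rho> i i * w i)"
    using nonneg w by (subst sum_ennreal) auto
  finally show ?thesis .
qed

lemma nn_integral_poissonized_measurements_exp:
  assumes "0 < m"
    and nonneg: "\<And>i. i < n \<Longrightarrow> 0 \<le> \<rho> i i" and trace: "(\<Sum>i<n. \<rho> i i) = 1"
  shows "(\<integral>\<^sup>+xs. ennreal (exp (\<Sum>i<n. \<theta> i * real (count_list xs i)))
            \<partial>measure_pmf (poissonized_measurements m n \<rho>))
       = ennreal (exp (m * ((\<Sum>i<n. \<rho> i i * exp (\<theta> i)) - 1)))"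
proof -
  define w where "w = (\<lambda>x. if x < n then exp (\<theta> x) else 1)"
  have w: "\<And>x. 0 \<le> w x" by (simp add: w_def)
  have "(\<integral>\<^sup>+x. ennreal (w x) \<partial>measure_pmf (measure_comp_basis n \<rho>)) =
      ennreal (\<Sum>i<n. \<rho> i i * exp (\<theta> i))"
    using nn_integral_measure_comp_basis[of n \<rho> w, OF nonneg trace w] by (simp add: w_def)
  moreover have "0 \<le> (\<Sum>i<n. \<rho> i i * exp (\<theta> i))" using nonneg by (intro sum_nonneg) auto
  ultimately show ?thesis
    unfolding poissonized_measurements_def nn_integral_bind_pmf exp_sum_count_list w_def[symmetric]
    using nn_integral_poisson_pmf_power[OF \<open>0 < m\<close>]
    by (simp add: nn_integral_replicate_pmf_prod_list[OF w] ennreal_power[symmetric])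
qed

lemma nn_integral_poissonized_measurements_signed_deviation_le:
  assumes "0 < m" and "0 \<le> t" and "t \<le> 1" and \<sigma>: "\<And>i. \<bar>\<sigma> i\<bar> \<le> 1"
    and nonneg: "\<And>i. i < n \<Longrightarrow> 0 \<le> \<rho> i i" and trace: "(\<Sum>i<n. \<rho> i i) = 1"
  shows "(\<integral>\<^sup>+xs. ennreal (exp (t * (\<Sum>i<n. \<sigma> i * (real (count_list xs i) - m * \<rho> i i))))
            \<partial>measure_pmf (poissonized_measurements m n \<rho>))
       \<le> ennreal (exp ((1/2 + t) * m * t\<^sup>2))"
proof -
  define \<theta> where "\<theta> i = t * \<sigma> i" for i
  have "t * (\<Sum>i<n. \<sigma> i * (real (count_list xs i) - m * \<rho> i i)) =
      (\<Sum>i<n. \<theta> i * real (count_list xs i)) - m * (\<Sum>i<n. \<rho> i i * \<theta> i)" for xs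
    by (simp add: \<theta>_def sum_distrib_left sum_subtractf algebra_simps)
  then have "(\<integral>\<^sup>+xs. ennreal (exp (t * (\<Sum>i<n. \<sigma> i * (real (count_list xs i) - m * \<rho> i i))))
            \<partial>measure_pmf (poissonized_measurements m n \<rho>))
      = ennreal (exp (m * ((\<Sum>i<n. \<rho> i i * exp (\<theta> i)) - 1))) *
        ennreal (exp (- m * (\<Sum>i<n. \<rho> i i * \<theta> i)))"
    by (simp add: exp_diff ennreal_mult nn_integral_multc divide_inverse exp_minus[symmetric]
        nn_integral_poissonized_measurements_exp[of m n \<rho>, OF \<open>0 < m\<close> nonneg trace])
  also have "\<dots> = ennreal (exp (m * ((\<Sum>i<n. \<rho> i i * exp (\<theta> i)) - 1 - (\<Sum>i<n. \<rho> i i * \<theta> i))))"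
    by (simp add: ennreal_mult[symmetric] mult_exp_exp algebra_simps)
  also have "(\<Sum>i<n. \<rho> i i * exp (\<theta> i)) - 1 - (\<Sum>i<n. \<rho> i i * \<theta> i) =
      (\<Sum>i<n. \<rho> i i * (exp (\<theta> i) - 1 - \<theta> i))"
    by (simp add: trace right_diff_distrib sum_subtractf)
  also have "ennreal (exp (m * (\<Sum>i<n. \<rho> i i * (exp (\<theta> i) - 1 - \<theta> i)))) \<le>
      ennreal (exp ((1/2 + t) * m * t\<^sup>2))"
  proof -
    have "exp (\<theta> i) - 1 - \<theta> i \<le> (1/2 + t) * t\<^sup>2" for i
      unfolding \<theta>_def using assms(2,3) \<sigma> by (rule exp_scaled_minus_one_minus_le)
    then have "(\<Sum>i<n. \<rho> i i * (exp (\<theta> i) - 1 - \<theta> i)) \<le> (\<Sum>i<n. \<rho> i i * ((1/2 + t) * t\<^sup>2))"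
      using nonneg by (intro sum_mono mult_left_mono) auto
    also have "\<dots> = (1/2 + t) * t\<^sup>2" by (simp add: sum_distrib_right[symmetric] trace)
    finally have "m * (\<Sum>i<n. \<rho> i i * (exp (\<theta> i) - 1 - \<theta> i)) \<le> (1/2 + t) * m * t\<^sup>2"
      using \<open>0 < m\<close> by (simp add: mult_left_mono mult.left_commute)
    then show ?thesis by (simp add: ennreal_leI)
  qed
  finally show ?thesis .
qed

definition sign_pattern :: "nat set \<Rightarrow> nat \<Rightarrow> real" where
  "sign_pattern S i = (if i \<in> S then 1 else -1)"

lemma abs_sign_pattern [simp]: "\<bar>sign_pattern S i\<bar> = 1"
  by (simp add: sign_pattern_def)

lemma sum_abs_eq_sum_sign_pattern:
  "(\<Sum>i\<in>A. \<bar>y i\<bar>) = (\<Sum>i\<in>A. sign_pattern {i\<in>A. 0 \<le> y i} i * y i)"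
  by (intro sum.cong) (auto simp: sign_pattern_def)

lemma poissonized_measurements_l1_concentration:
  assumes "0 < m" and "0 < t" and "t \<le> 1"
    and nonneg: "\<And>i. i < n \<Longrightarrow> 0 \<le> \<rho> i i" and trace: "(\<Sum>i<n. \<rho> i i) = 1"
  shows "measure_pmf.prob (poissonized_measurements m n \<rho>)
           {xs. (\<Sum>i<n. \<bar>real (count_list xs i) / m - \<rho> i i\<bar>) \<le> t}
         \<ge> 1 - 2 ^ n * exp (- ((1/2 - t) * m * t\<^sup>2))"
proof -
  define M where "M = measure_pmf (poissonized_measurements m n \<rho>)"
  define B where "B = {xs. t < (\<Sum>i<n. \<bar>real (count_list xs i) / m - \<rho> i i\<bar>)}"
  define X where "X S xs = t * (\<Sum>i<n. sign_pattern S i * (real (count_list xs i) - m * \<rho> i i))"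
    for S xs
  have cover: "indicator B xs \<le> (\<Sum>S\<in>Pow {..<n}. ennreal (exp (X S xs - m * t\<^sup>2)))" for xs
  proof (cases "xs \<in> B")
    case True
    define S where "S = {i\<in>{..<n}. 0 \<le> real (count_list xs i) - m * \<rho> i i}"
    have "m * t < m * (\<Sum>i<n. \<bar>real (count_list xs i) / m - \<rho> i i\<bar>)"
      using True \<open>0 < m\<close> by (simp add: B_def)
    also have "\<dots> = (\<Sum>i<n. \<bar>real (count_list xs i) - m * \<rho> i i\<bar>)"
      using \<open>0 < m\<close> by (simp add: sum_distrib_left abs_mult_pos' right_diff_distrib)
    also have "\<dots> = (\<Sum>i<n. sign_pattern S i * (real (count_list xs i) - m * \<rho> i i))"
      unfolding S_def by (rule sum_abs_eq_sum_sign_pattern)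
    finally have "1 \<le> exp (X S xs - m * t\<^sup>2)"
      using \<open>0 < t\<close> by (simp add: X_def power2_eq_square mult.commute[of m])
    then have "indicator B xs \<le> ennreal (exp (X S xs - m * t\<^sup>2))"
      using True by simp
    also have "\<dots> \<le> (\<Sum>S\<in>Pow {..<n}. ennreal (exp (X S xs - m * t\<^sup>2)))"
      by (rule member_le_sum) (auto simp: S_def)
    finally show ?thesis .
  qed simp
  have moment: "(\<integral>\<^sup>+xs. ennreal (exp (X S xs - m * t\<^sup>2)) \<partial>M) \<le>
      ennreal (exp (- ((1/2 - t) * m * t\<^sup>2)))" for S
  proof -
    have "(\<integral>\<^sup>+xs. ennreal (exp (X S xs - m * t\<^sup>2)) \<partial>M) =
        (\<integral>\<^sup>+xs. ennreal (exp (X S xs)) \<partial>M) * ennreal (exp (- m * t\<^sup>2))"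
      by (simp add: M_def exp_diff divide_inverse exp_minus[symmetric] ennreal_mult nn_integral_multc)
    also have "\<dots> \<le> ennreal (exp ((1/2 + t) * m * t\<^sup>2)) * ennreal (exp (- m * t\<^sup>2))"
      unfolding M_def X_def using assms
      by (intro mult_right_mono nn_integral_poissonized_measurements_signed_deviation_le) auto
    also have "\<dots> = ennreal (exp (- ((1/2 - t) * m * t\<^sup>2)))"
      by (simp add: ennreal_mult[symmetric] mult_exp_exp algebra_simps)
    finally show ?thesis .
  qed
  have "emeasure M B = (\<integral>\<^sup>+xs. indicator B xs \<partial>M)"
    by (simp add: M_def)
  also have "\<dots> \<le> (\<integral>\<^sup>+xs. (\<Sum>S\<in>Pow {..<n}. ennreal (exp (X S xs - m * t\<^sup>2))) \<partial>M)"
    by (intro nn_integral_mono cover)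
  also have "\<dots> = (\<Sum>S\<in>Pow {..<n}. \<integral>\<^sup>+xs. ennreal (exp (X S xs - m * t\<^sup>2)) \<partial>M)"
    by (intro nn_integral_sum) (simp add: M_def)
  also have "\<dots> \<le> (\<Sum>S\<in>Pow {..<n}. ennreal (exp (- ((1/2 - t) * m * t\<^sup>2))))"
    by (intro sum_mono moment)
  also have "\<dots> = ennreal (2 ^ n * exp (- ((1/2 - t) * m * t\<^sup>2)))"
    by (simp add: card_Pow ennreal_mult ennreal_power[symmetric])
  finally have "measure_pmf.prob (poissonized_measurements m n \<rho>) B \<le> 2 ^ n * exp (- ((1/2 - t) * m * t\<^sup>2))"
    unfolding M_def by (simp add: measure_pmf.emeasure_eq_measure)
  moreover have "{xs. (\<Sum>i<n. \<bar>real (count_list xs i) / m - \<rho> i i\<bar>) \<le> t} = UNIV - B"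
    by (auto simp: B_def)
  ultimately show ?thesis
    using measure_pmf.prob_compl[of B "poissonized_measurements m n \<rho>"] by simp
qed

text \<open>Here \<open>m (\<epsilon>/8)\<^sup>2 = (137/64) (n ln 2 + ln (1/\<delta>))\<close> and \<open>1/2 - \<epsilon>/8 \<ge> 15/32\<close>;
  137 is the least integer \<open>c\<close> with \<open>(15/32) (c/64) \<ge> 1\<close>.\<close>

lemma sample_size_tail_le:
  fixes \<epsilon> \<delta> m :: real
  assumes "0 < \<epsilon>" and "\<epsilon> \<le> 1/4" and "0 < \<delta>" and "\<delta> \<le> 1"
    and "m = 137 / \<epsilon>\<^sup>2 * (real n * ln 2 + ln (1 / \<delta>))"
  shows "2 ^ n * exp (- ((1/2 - \<epsilon> / 8) * m * (\<epsilon> / 8)\<^sup>2)) \<le> \<delta>"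
proof -
  define L where "L = real n * ln 2 + ln (1 / \<delta>)"
  have "0 \<le> L" using assms(3,4) by (simp add: L_def)
  have "m * (\<epsilon> / 8)\<^sup>2 = 137 / 64 * L"
    using assms(1,5) by (simp add: L_def field_simps power2_eq_square)
  then have "(1/2 - \<epsilon> / 8) * m * (\<epsilon> / 8)\<^sup>2 = (1/2 - \<epsilon> / 8) * (137 / 64 * L)"
    by (simp only: mult.assoc)
  moreover have "15 / 32 * (137 / 64 * L) \<le> (1/2 - \<epsilon> / 8) * (137 / 64 * L)"
    using \<open>0 \<le> L\<close> assms(2) by (intro mult_right_mono) auto
  ultimately have "L \<le> (1/2 - \<epsilon> / 8) * m * (\<epsilon> / 8)\<^sup>2"
    using \<open>0 \<le> L\<close> by linarith
  then have "exp (- ((1/2 - \<epsilon> / 8) * m * (\<epsilon> / 8)\<^sup>2)) \<le> exp (- L)"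
    by simp
  also have "exp (- L) = \<delta> / 2 ^ n"
    using assms(3) by (simp add: L_def ln_div exp_diff exp_of_nat_mult)
  finally show ?thesis by (simp add: field_simps)
qed

theorem lemma9:
  fixes n :: nat and \<epsilon> \<delta> m :: real and \<rho> \<rho>t :: "nat \<Rightarrow> nat \<Rightarrow> real"
  assumes "0 < \<epsilon>" and "\<epsilon> \<le> 1/4" and "0 < \<delta>" and "\<delta> < 1"
    and "density_matrix n \<rho>" and "density_matrix n \<rho>t"
    and "(\<Sum>i<n. \<bar>\<rho>t i i - \<rho> i i\<bar>) \<le> \<epsilon> / 8"
    and "m = 137 / \<epsilon>\<^sup>2 * (real n * ln 2 + ln (1 / \<delta>))"
  shows "measure_pmf.prob (poissonized_measurements m n \<rho>t)
           {xs. (\<Sum>i<n. \<bar>real (count_list xs i) / m - \<rho> i i\<bar>) \<le> \<epsilon> / 4} \<ge> 1 - \<delta>"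
proof -
  have "0 < m" using assms(1,3,4,8) by (simp add: add_nonneg_pos)
  have "1 - \<delta> \<le> 1 - 2 ^ n * exp (- ((1/2 - \<epsilon> / 8) * m * (\<epsilon> / 8)\<^sup>2))"
    using sample_size_tail_le[of \<epsilon> \<delta> m n] assms(1-4,8) by simp
  also have "\<dots> \<le> measure_pmf.prob (poissonized_measurements m n \<rho>t)
      {xs. (\<Sum>i<n. \<bar>real (count_list xs i) / m - \<rho>t i i\<bar>) \<le> \<epsilon> / 8}"
    using \<open>0 < m\<close> assms(1,2) density_matrix_trace[OF assms(6)]
    by (intro poissonized_measurements_l1_concentration density_matrix_diag_nonneg[OF assms(6)])
      auto
  also have "\<dots> \<le> measure_pmf.prob (poissonized_measurements m n \<rho>t)
      {xs. (\<Sum>i<n. \<bar>real (count_list xs i) / m - \<rho> i i\<bar>) \<le> \<epsilon> / 4}"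
  proof (rule measure_pmf.finite_measure_mono, safe)
    fix xs assume "(\<Sum>i<n. \<bar>real (count_list xs i) / m - \<rho>t i i\<bar>) \<le> \<epsilon> / 8"
    moreover have "(\<Sum>i<n. \<bar>real (count_list xs i) / m - \<rho> i i\<bar>) \<le>
        (\<Sum>i<n. \<bar>real (count_list xs i) / m - \<rho>t i i\<bar>) + (\<Sum>i<n. \<bar>\<rho>t i i - \<rho> i i\<bar>)"
      unfolding sum.distrib[symmetric] by (intro sum_mono) arith
    ultimately show "(\<Sum>i<n. \<bar>real (count_list xs i) / m - \<rho> i i\<bar>) \<le> \<epsilon> / 4"
      using assms(7) by simp
  qed simp
  finally show ?thesis .
qed

end
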